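(* Let $G$ be a graph whose vertex set is partitioned into three cliques $A_1,A_2,A_3$ (equivalently, $G$ is the complement of a 3-partite graph with color classes $A_1,A_2,A_3$). If the vertex set of $G$ can be partitioned into triangles, then there is a partition of the vertex set of $G$ into triangles such that, for each $i\in\{1,2,3\}$, at most $14$ vertices of $A_i$ lie in triangles of the partition that are not entirely contained in $A_i$. *)

theory Defs
  imports Main
begin

definition simple_graph :: "'a set \<Rightarrow> ('a \<Rightarrow> 'a \<Rightarrow> bool) \<Rightarrow> bool" where
  "simple_graph V E \<longleftrightarrow> (\<forall>x y. E x y \<longrightarrow> x \<in> V \<and> y \<in> V) \<and>
     (\<forall>x y. E x y \<longrightarrow> E y x) \<and> (\<forall>x. \<not> E x x)"

definition is_clique :: "('a \<Rightarrow> 'a \<Rightarrow> bool) \<Rightarrow> 'a set \<Rightarrow> bool" where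
  "is_clique E C \<longleftrightarrow> (\<forall>x\<in>C. \<forall>y\<in>C. x \<noteq> y \<longrightarrow> E x y)"

definition is_triangle :: "'a set \<Rightarrow> ('a \<Rightarrow> 'a \<Rightarrow> bool) \<Rightarrow> 'a set \<Rightarrow> bool" where
  "is_triangle V E T \<longleftrightarrow> T \<subseteq> V \<and> card T = 3 \<and> is_clique E T"

definition triangle_partition :: "'a set \<Rightarrow> ('a \<Rightarrow> 'a \<Rightarrow> bool) \<Rightarrow> 'a set set \<Rightarrow> bool" where
  "triangle_partition V E P \<longleftrightarrow> (\<forall>T\<in>P. is_triangle V E T) \<and>
     (\<forall>S\<in>P. \<forall>T\<in>P. S \<noteq> T \<longrightarrow> S \<inter> T = {}) \<and> \<Union>P = V"

end

theory Submission
  imports Defs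
begin

(* Call a triangle mixed
   if it is not contained in a single class, and its profile the numbers of its vertices in
   each class.  Among all triangle partitions choose one with the fewest mixed triangles.
   If three of its triangles, one of them mixed, had the same profile, then their union
   would meet every class in a multiple of three vertices; each such piece splits into
   triples, which are triangles because the classes are cliques, and replacing the three
   triangles by these pure ones lowers the number of mixed triangles.  Hence every profile
   occurs at most twice among the mixed triangles.  A mixed triangle meeting A1 has one of
   the five profiles (1,2,0), (1,0,2), (1,1,1), (2,1,0), (2,0,1), so at most
   2 * (1 + 1 + 1 + 2 + 2) = 14 vertices of A1 lie in mixed triangles. *)

definition clique_cover :: "'a set \<Rightarrow> ('a \<Rightarrow> 'a \<Rightarrow> bool) \<Rightarrow> 'a set set \<Rightarrow> bool" where
  "clique_cover V E \<A> \<longleftrightarrow> (\<forall>A\<in>\<A>. is_clique E A) \<and> pairwise disjnt \<A> \<and> \<Union>\<A> = V"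

definition mixed :: "'a set set \<Rightarrow> 'a set \<Rightarrow> bool" where
  "mixed \<A> T \<longleftrightarrow> (\<forall>A\<in>\<A>. \<not> T \<subseteq> A)"

definition mixed_count :: "'a set set \<Rightarrow> 'a set set \<Rightarrow> nat" where
  "mixed_count \<A> P = card {T\<in>P. mixed \<A> T}"

definition same_profile :: "'a set set \<Rightarrow> 'a set \<Rightarrow> 'a set \<Rightarrow> bool" where
  "same_profile \<A> S T \<longleftrightarrow> (\<forall>A\<in>\<A>. card (S \<inter> A) = card (T \<inter> A))"

definition no_three_alike :: "'a set set \<Rightarrow> 'a set set \<Rightarrow> bool" where
  "no_three_alike \<A> P \<longleftrightarrow> (\<forall>T1\<in>P. \<forall>T2\<in>P. \<forall>T3\<in>P.
     mixed \<A> T1 \<and> same_profile \<A> T1 T2 \<and> same_profile \<A> T1 T3 \<longrightarrow>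
     T1 = T2 \<or> T1 = T3 \<or> T2 = T3)"

lemma triangle_partition_iff:
  "triangle_partition V E P \<longleftrightarrow> (\<forall>T\<in>P. is_triangle V E T) \<and> pairwise disjnt P \<and> \<Union>P = V"
  by (auto simp: triangle_partition_def pairwise_def disjnt_def)

lemma finite_triangle_partition:
  assumes "finite V" "triangle_partition V E P"
  shows "finite P"
proof -
  have "P \<subseteq> Pow V"
    using assms(2) by (auto simp: triangle_partition_def is_triangle_def)
  then show ?thesis
    using assms(1) finite_subset by blast
qed

lemma partition_into_triples:
  assumes "finite S" "card S = 3 * n"
  shows "\<exists>Q. (\<forall>T\<in>Q. T \<subseteq> S \<and> card T = 3) \<and> pairwise disjnt Q \<and> \<Union>Q = S"
  using assms
proof (induction n arbitrary: S)
  case 0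
  then show ?case
    by (intro exI[of _ "{}"]) auto
next
  case (Suc n)
  obtain T where T: "T \<subseteq> S" "card T = 3" "finite T"
    using obtain_subset_with_card_n[of 3 S] Suc.prems(2) by auto
  have "card (S - T) = 3 * n"
    using T Suc.prems by (simp add: card_Diff_subset)
  then obtain Q where Q: "\<forall>X\<in>Q. X \<subseteq> S - T \<and> card X = 3" "pairwise disjnt Q" "\<Union>Q = S - T"
    using Suc.IH[of "S - T"] Suc.prems(1) by auto
  have "pairwise disjnt (insert T Q)"
    using Q(1,2) by (auto simp: pairwise_insert disjnt_def)
  then show ?case
    using Q T by (intro exI[of _ "insert T Q"]) auto
qed

lemma pure_triangle_partition:
  assumes cover: "clique_cover V E \<A>" and "finite V" "S \<subseteq> V"
    and dvd: "\<forall>A\<in>\<A>. 3 dvd card (S \<inter> A)"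
  shows "\<exists>Q. (\<forall>T\<in>Q. is_triangle V E T \<and> \<not> mixed \<A> T) \<and> pairwise disjnt Q \<and> \<Union>Q = S"
proof -
  have "\<forall>A\<in>\<A>. \<exists>Q. (\<forall>T\<in>Q. T \<subseteq> S \<inter> A \<and> card T = 3) \<and> pairwise disjnt Q \<and> \<Union>Q = S \<inter> A"
  proof
    fix A assume "A \<in> \<A>"
    have "finite (S \<inter> A)"
      using assms(2,3) finite_subset by blast
    moreover obtain n where "card (S \<inter> A) = 3 * n"
      using dvd \<open>A \<in> \<A>\<close> by (auto elim: dvdE)
    ultimately show "\<exists>Q. (\<forall>T\<in>Q. T \<subseteq> S \<inter> A \<and> card T = 3) \<and> pairwise disjnt Q \<and> \<Union>Q = S \<inter> A"
      by (rule partition_into_triples)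
  qed
  from bchoice[OF this] obtain Qof where Qof: "\<forall>A\<in>\<A>. (\<forall>T\<in>Qof A. T \<subseteq> S \<inter> A \<and> card T = 3)
      \<and> pairwise disjnt (Qof A) \<and> \<Union>(Qof A) = S \<inter> A"
    by blast
  have cliques: "\<And>A. A \<in> \<A> \<Longrightarrow> is_clique E A" and classes_disjoint: "pairwise disjnt \<A>"
    and covers: "\<Union>\<A> = V"
    using cover by (auto simp: clique_cover_def)
  define Q where "Q = (\<Union>A\<in>\<A>. Qof A)"
  have "is_triangle V E T \<and> \<not> mixed \<A> T" if "T \<in> Q" for T
  proof -
    obtain A where A: "A \<in> \<A>" "T \<in> Qof A"
      using \<open>T \<in> Q\<close> by (auto simp: Q_def)
    then have sub: "T \<subseteq> S \<inter> A" and "card T = 3"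
      using Qof by auto
    moreover have "is_clique E T"
      using cliques[OF A(1)] sub by (auto simp: is_clique_def)
    moreover have "\<not> mixed \<A> T"
      using A(1) sub by (auto simp: mixed_def)
    ultimately show ?thesis
      using \<open>S \<subseteq> V\<close> by (auto simp: is_triangle_def)
  qed
  moreover have "pairwise disjnt Q"
  proof (rule pairwiseI)
    fix X Y assume "X \<in> Q" "Y \<in> Q" "X \<noteq> Y"
    then obtain A B where AB: "A \<in> \<A>" "X \<in> Qof A" "B \<in> \<A>" "Y \<in> Qof B"
      by (auto simp: Q_def)
    show "disjnt X Y"
    proof (cases "A = B")
      case True
      then show ?thesis
        using Qof AB \<open>X \<noteq> Y\<close> by (auto simp: pairwise_def)
    next
      case False
      then have "disjnt A B"
        using classes_disjoint AB by (auto simp: pairwise_def)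
      moreover have "X \<subseteq> A" "Y \<subseteq> B"
        using Qof AB by auto
      ultimately show ?thesis
        by (auto simp: disjnt_def)
    qed
  qed
  moreover have "\<Union>Q = S"
  proof -
    have "\<Union>Q = (\<Union>A\<in>\<A>. \<Union>(Qof A))"
      by (auto simp: Q_def)
    also have "\<dots> = (\<Union>A\<in>\<A>. S \<inter> A)"
      using Qof by simp
    also have "\<dots> = S"
      using covers \<open>S \<subseteq> V\<close> by auto
    finally show ?thesis .
  qed
  ultimately show ?thesis
    by blast
qed

lemma triangle_partition_replace:
  assumes tp: "triangle_partition V E P" and "F \<subseteq> P"
    and Q: "\<forall>T\<in>Q. is_triangle V E T" "pairwise disjnt Q" "\<Union>Q = \<Union>F"
  shows "triangle_partition V E ((P - F) \<union> Q)"
  unfolding triangle_partition_iff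
proof (intro conjI)
  have P: "\<forall>T\<in>P. is_triangle V E T" "pairwise disjnt P" "\<Union>P = V"
    using tp by (auto simp: triangle_partition_iff)
  show "\<forall>T\<in>(P - F) \<union> Q. is_triangle V E T"
    using P(1) Q(1) by blast
  have outside: "disjnt X Y" if "X \<in> P - F" "Y \<in> Q" for X Y
  proof -
    have "disjnt X Z" if "Z \<in> F" for Z
    proof (rule pairwiseD[OF P(2)])
      show "X \<in> P" "Z \<in> P" "X \<noteq> Z"
        using \<open>X \<in> P - F\<close> \<open>F \<subseteq> P\<close> that by auto
    qed
    moreover have "Y \<subseteq> \<Union>F"
      using Q(3) \<open>Y \<in> Q\<close> by blast
    ultimately show ?thesis
      by (auto simp: disjnt_def)
  qed
  show "pairwise disjnt ((P - F) \<union> Q)"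
  proof (rule pairwiseI)
    fix X Y assume "X \<in> (P - F) \<union> Q" "Y \<in> (P - F) \<union> Q" "X \<noteq> Y"
    then show "disjnt X Y"
      using pairwiseD[OF P(2)] pairwiseD[OF Q(2)] outside disjnt_sym by (metis DiffD1 UnE)
  qed
  show "\<Union>((P - F) \<union> Q) = V"
    using P(3) Q(3) \<open>F \<subseteq> P\<close> by blast
qed

lemma regrouping_reduces_mixed:
  assumes "finite V" and cover: "clique_cover V E \<A>" and tp: "triangle_partition V E P"
    and "F \<subseteq> P" "T \<in> F" "mixed \<A> T"
    and "\<forall>A\<in>\<A>. 3 dvd card (\<Union>F \<inter> A)"
  shows "\<exists>P'. triangle_partition V E P' \<and> mixed_count \<A> P' < mixed_count \<A> P"
proof -
  have "\<Union>F \<subseteq> V"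
    using tp \<open>F \<subseteq> P\<close> by (auto simp: triangle_partition_def)
  then obtain Q where Q: "\<forall>T\<in>Q. is_triangle V E T \<and> \<not> mixed \<A> T" "pairwise disjnt Q" "\<Union>Q = \<Union>F"
    using pure_triangle_partition[OF cover \<open>finite V\<close> _ assms(7)] by blast
  define P' where "P' = (P - F) \<union> Q"
  have "triangle_partition V E P'"
    unfolding P'_def using Q by (intro triangle_partition_replace[OF tp \<open>F \<subseteq> P\<close>]) auto
  moreover have "{X\<in>P'. mixed \<A> X} \<subset> {X\<in>P. mixed \<A> X}"
    using Q(1) assms(4-6) by (auto simp: P'_def)
  then have "mixed_count \<A> P' < mixed_count \<A> P"
    unfolding mixed_count_def
    using finite_triangle_partition[OF \<open>finite V\<close> tp] by (intro psubset_card_mono) auto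
  ultimately show ?thesis
    by blast
qed

lemma card_Un3_disjoint:
  assumes "finite X" "finite Y" "finite Z" "disjnt X Y" "disjnt X Z" "disjnt Y Z"
  shows "card (X \<union> Y \<union> Z) = card X + card Y + card Z"
  using assms by (simp add: card_Un_disjoint disjnt_def Int_Un_distrib2)

lemma alike_triple_divisible:
  assumes "finite T1" "finite T2" "finite T3"
    and "disjnt T1 T2" "disjnt T1 T3" "disjnt T2 T3"
    and "card (T1 \<inter> A) = card (T2 \<inter> A)" "card (T1 \<inter> A) = card (T3 \<inter> A)"
  shows "3 dvd card ((T1 \<union> T2 \<union> T3) \<inter> A)"
proof -
  have "card ((T1 \<union> T2 \<union> T3) \<inter> A) = card ((T1 \<inter> A) \<union> (T2 \<inter> A) \<union> (T3 \<inter> A))"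
    by (simp add: Int_Un_distrib2)
  also have "\<dots> = card (T1 \<inter> A) + card (T2 \<inter> A) + card (T3 \<inter> A)"
    using assms(1-6) by (intro card_Un3_disjoint) (auto simp: disjnt_def)
  finally show ?thesis
    using assms(7,8) by presburger
qed

lemma exists_partition_no_three_alike:
  assumes "finite V" and cover: "clique_cover V E \<A>" and "\<exists>P. triangle_partition V E P"
  shows "\<exists>P. triangle_partition V E P \<and> no_three_alike \<A> P"
proof -
  obtain P where tp: "triangle_partition V E P"
    and minimal: "\<And>P'. triangle_partition V E P' \<Longrightarrow> mixed_count \<A> P \<le> mixed_count \<A> P'"
    using ex_has_least_nat[of "triangle_partition V E" _ "mixed_count \<A>"] assms(3) by metis
  have "T1 = T2 \<or> T1 = T3 \<or> T2 = T3"
    if T: "T1 \<in> P" "T2 \<in> P" "T3 \<in> P" "mixed \<A> T1"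
      "same_profile \<A> T1 T2" "same_profile \<A> T1 T3" for T1 T2 T3
  proof (rule ccontr)
    assume distinct: "\<not> (T1 = T2 \<or> T1 = T3 \<or> T2 = T3)"
    have fin: "finite T" if "T \<in> P" for T
      using tp that \<open>finite V\<close> finite_subset
      by (auto simp: triangle_partition_def is_triangle_def)
    have disj: "disjnt S T" if "S \<in> P" "T \<in> P" "S \<noteq> T" for S T
      using tp that by (auto simp: triangle_partition_iff pairwise_def)
    have "3 dvd card (\<Union>{T1, T2, T3} \<inter> A)" if "A \<in> \<A>" for A
      using alike_triple_divisible[of T1 T2 T3 A] fin disj T distinct that
      by (auto simp: same_profile_def Un_assoc)
    then obtain P' where "triangle_partition V E P'" "mixed_count \<A> P' < mixed_count \<A> P"
      using regrouping_reduces_mixed[OF \<open>finite V\<close> cover tp, of "{T1, T2, T3}" T1] T by auto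
    then show False
      using minimal by (meson not_le)
  qed
  then show ?thesis
    using tp unfolding no_three_alike_def by blast
qed

lemma card_le_2_if_no_three:
  assumes "\<And>x y z. x \<in> K \<Longrightarrow> y \<in> K \<Longrightarrow> z \<in> K \<Longrightarrow> x \<noteq> y \<Longrightarrow> x \<noteq> z \<Longrightarrow> y \<noteq> z \<Longrightarrow> False"
  shows "card K \<le> 2"
proof (rule ccontr)
  assume "\<not> card K \<le> 2"
  then obtain S where "S \<subseteq> K" "card S = 3"
    using obtain_subset_with_card_n[of 3 K] by auto
  then obtain x y z where "{x, y, z} \<subseteq> K" "x \<noteq> y" "y \<noteq> z" "x \<noteq> z"
    by (metis card_3_iff)
  then show False
    using assms[of x y z] by blast
qed

lemma profile_of_triangle_leaving_class:
  assumes "finite T" "card T = 3" "T \<subseteq> A \<union> B \<union> C"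
    and "disjnt A B" "disjnt A C" "disjnt B C"
    and "T \<inter> A \<noteq> {}" "\<not> T \<subseteq> A"
  shows "(card (T \<inter> A), card (T \<inter> B), card (T \<inter> C))
    \<in> {(1,2,0), (1,0,2), (1,1,1), (2,1,0), (2,0,1)}"
proof -
  have "(T \<inter> A) \<union> (T \<inter> B) \<union> (T \<inter> C) = T"
    using assms(3) by blast
  moreover have "card ((T \<inter> A) \<union> (T \<inter> B) \<union> (T \<inter> C))
      = card (T \<inter> A) + card (T \<inter> B) + card (T \<inter> C)"
    using assms(1,4-6) by (intro card_Un3_disjoint) (auto simp: disjnt_def)
  ultimately have sum: "card (T \<inter> A) + card (T \<inter> B) + card (T \<inter> C) = 3"
    using assms(2) by simp
  have "card (T \<inter> A) \<ge> 1"
    using assms(1,7) by (simp add: Suc_le_eq card_gt_0_iff)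
  moreover have "card (T \<inter> A) \<noteq> 3"
    using card_subset_eq[OF assms(1), of "T \<inter> A"] assms(2,8) by auto
  ultimately show ?thesis
    using sum by auto
qed

text \<open>In a partition without three alike mixed triangles, at most 14 vertices of a class
  lie in triangles leaving that class: at most two triangles per possible profile.\<close>
lemma mixed_vertices_in_class:
  assumes "finite V" and tp: "triangle_partition V E P"
    and classes: "\<A> = {A, B, C}" "A \<union> B \<union> C = V"
    and disj: "disjnt A B" "disjnt A C" "disjnt B C"
    and alike: "no_three_alike \<A> P"
  shows "card {v \<in> A. \<exists>T\<in>P. v \<in> T \<and> \<not> T \<subseteq> A} \<le> 14"
proof -
  define profile where "profile T = (card (T \<inter> A), card (T \<inter> B), card (T \<inter> C))" for T
  define \<Pi> :: "(nat \<times> nat \<times> nat) set" where "\<Pi> = {(1,2,0), (1,0,2), (1,1,1), (2,1,0), (2,0,1)}"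
  define K where "K p = {T\<in>P. mixed \<A> T \<and> profile T = p}" for p
  have triangle: "T \<subseteq> V" "card T = 3" "finite T" if "T \<in> P" for T
    using tp that \<open>finite V\<close> finite_subset
    by (auto simp: triangle_partition_def is_triangle_def)
  have finK: "finite (K p)" for p
    using finite_triangle_partition[OF \<open>finite V\<close> tp] by (simp add: K_def)
  have finW: "finite (\<Union>T\<in>K p. T \<inter> A)" for p
  proof (rule finite_UN_I[OF finK])
    show "finite (T \<inter> A)" if "T \<in> K p" for T
      using triangle(3) that by (simp add: K_def)
  qed
  have K2: "card (K p) \<le> 2" for p
  proof (rule card_le_2_if_no_three)
    fix x y z assume "x \<in> K p" "y \<in> K p" "z \<in> K p"
    then have "x \<in> P" "y \<in> P" "z \<in> P" "mixed \<A> x"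
      "same_profile \<A> x y" "same_profile \<A> x z"
      by (auto simp: K_def profile_def same_profile_def classes(1))
    then show "x \<noteq> y \<Longrightarrow> x \<noteq> z \<Longrightarrow> y \<noteq> z \<Longrightarrow> False"
      using alike by (auto simp: no_three_alike_def)
  qed
  have "{v \<in> A. \<exists>T\<in>P. v \<in> T \<and> \<not> T \<subseteq> A} \<subseteq> (\<Union>p\<in>\<Pi>. \<Union>T\<in>K p. T \<inter> A)"
  proof
    fix v assume "v \<in> {v \<in> A. \<exists>T\<in>P. v \<in> T \<and> \<not> T \<subseteq> A}"
    then obtain T where T: "v \<in> A" "T \<in> P" "v \<in> T" "\<not> T \<subseteq> A"
      by auto
    have "mixed \<A> T"
      using T disj by (auto simp: mixed_def classes(1) disjnt_def)
    moreover have "profile T \<in> \<Pi>"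
      unfolding profile_def \<Pi>_def
      by (rule profile_of_triangle_leaving_class)
        (use triangle[OF T(2)] classes(2) disj T in auto)
    ultimately show "v \<in> (\<Union>p\<in>\<Pi>. \<Union>T\<in>K p. T \<inter> A)"
      using T by (auto simp: K_def)
  qed
  then have "card {v \<in> A. \<exists>T\<in>P. v \<in> T \<and> \<not> T \<subseteq> A} \<le> card (\<Union>p\<in>\<Pi>. \<Union>T\<in>K p. T \<inter> A)"
    using finW by (intro card_mono) (auto simp: \<Pi>_def)
  also have "\<dots> \<le> (\<Sum>p\<in>\<Pi>. card (\<Union>T\<in>K p. T \<inter> A))"
    by (rule card_UN_le) (simp add: \<Pi>_def)
  also have "\<dots> \<le> (\<Sum>p\<in>\<Pi>. 2 * fst p)"
  proof (rule sum_mono)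
    fix p assume "p \<in> \<Pi>"
    have "card (\<Union>T\<in>K p. T \<inter> A) \<le> (\<Sum>T\<in>K p. card (T \<inter> A))"
      by (rule card_UN_le[OF finK])
    also have "\<dots> = (\<Sum>T\<in>K p. fst p)"
      by (rule sum.cong) (auto simp: K_def profile_def)
    also have "\<dots> = card (K p) * fst p"
      by simp
    also have "\<dots> \<le> 2 * fst p"
      using K2 by simp
    finally show "card (\<Union>T\<in>K p. T \<inter> A) \<le> 2 * fst p" .
  qed
  also have "\<dots> = 14"
    by (simp add: \<Pi>_def)
  finally show ?thesis .
qed

theorem mainTheorem13:
  fixes V :: "'a set" and E :: "'a \<Rightarrow> 'a \<Rightarrow> bool" and A1 A2 A3 :: "'a set"
  assumes "finite V" and "simple_graph V E"
    and "A1 \<union> A2 \<union> A3 = V"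
    and "A1 \<inter> A2 = {}" and "A1 \<inter> A3 = {}" and "A2 \<inter> A3 = {}"
    and "is_clique E A1" and "is_clique E A2" and "is_clique E A3"
    and "\<exists>P. triangle_partition V E P"
  shows "\<exists>P. triangle_partition V E P \<and>
    (\<forall>A\<in>{A1, A2, A3}. card {v \<in> A. \<exists>T\<in>P. v \<in> T \<and> \<not> T \<subseteq> A} \<le> 14)"
proof -
  have disj: "disjnt A1 A2" "disjnt A1 A3" "disjnt A2 A3"
    using assms(4-6) by (simp_all add: disjnt_def)
  have "clique_cover V E {A1, A2, A3}"
    using assms(3,7-9) disj by (auto simp: clique_cover_def pairwise_def disjnt_commute)
  then obtain P where tp: "triangle_partition V E P" and alike: "no_three_alike {A1, A2, A3} P"
    using exists_partition_no_three_alike assms(1,10) by blast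
  have "card {v \<in> A1. \<exists>T\<in>P. v \<in> T \<and> \<not> T \<subseteq> A1} \<le> 14"
    by (rule mixed_vertices_in_class[OF assms(1) tp _ assms(3) disj alike]) simp
  moreover have "card {v \<in> A2. \<exists>T\<in>P. v \<in> T \<and> \<not> T \<subseteq> A2} \<le> 14"
    by (rule mixed_vertices_in_class[OF assms(1) tp _ _ _ _ _ alike, of A2 A1 A3])
      (use assms(3) disj in \<open>auto simp: disjnt_commute\<close>)
  moreover have "card {v \<in> A3. \<exists>T\<in>P. v \<in> T \<and> \<not> T \<subseteq> A3} \<le> 14"
    by (rule mixed_vertices_in_class[OF assms(1) tp _ _ _ _ _ alike, of A3 A1 A2])
      (use assms(3) disj in \<open>auto simp: disjnt_commute\<close>)
  ultimately show ?thesis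
    using tp by auto
qed

end
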